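(* Let $K\subset L$ be a finite separable extension of commutative fields. Let $B$ be a $K$-subspace of $L$ containing $1$. Then the smallest integer $n\geq1$ such that $\langle B^n\rangle$ is a field satisfies $n\leq 2\dim_KL/\dim_KB$.
   Context: For $S\subset L$, $\langle S\rangle$ denotes the $K$-subspace of $L$ spanned by $S$. $B^m=\{b_1\cdots b_m\mid b_i\in B\}$ is the $m$-fold product set. *)

theory Defs
  imports "HOL-Algebra.Algebra"
begin

text \<open>Formal derivative of a polynomial in the HOL-Algebra list representation
  (coefficients listed from the leading one down to the constant term).\<close>
definition (in ring) pderiv_list :: "'a list \<Rightarrow> 'a list" where
  "pderiv_list p =
     normalize (map (\<lambda>i. add_pow R (length p - 1 - i) (p ! i)) [0..< length p - 1])"

definition (in ring) separable_poly :: "'a set \<Rightarrow> 'a list \<Rightarrow> bool" where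
  "separable_poly K p \<longleftrightarrow>
     (\<forall>d \<in> carrier (K[X]). d divides\<^bsub>K[X]\<^esub> p \<and> d divides\<^bsub>K[X]\<^esub> pderiv_list p
        \<longrightarrow> d \<in> Units (K[X]))"

definition (in ring) separable_elem :: "'a set \<Rightarrow> 'a \<Rightarrow> bool" where
  "separable_elem K x \<longleftrightarrow> algebraic K x \<and> separable_poly K (Irr K x)"

definition (in ring) separable_ext :: "'a set \<Rightarrow> bool" where
  "separable_ext K \<longleftrightarrow> (\<forall>x \<in> carrier R. separable_elem K x)"

fun (in ring) prod_set :: "'a set \<Rightarrow> nat \<Rightarrow> 'a set" where
  "prod_set B 0 = {\<one>}"
| "prod_set B (Suc m) = {b \<otimes> c | b c. b \<in> B \<and> c \<in> prod_set B m}"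

definition (in ring) span_set :: "'a set \<Rightarrow> 'a set \<Rightarrow> 'a set" where
  "span_set K S = (\<Union> {Span K Us | Us. set Us \<subseteq> S})"

end

theory Submission
  imports Defs
begin

text \<open>Let F be the field spanned by \<open>B\<^sup>n\<close>, n minimal. A K-hyperplane W of F avoiding 1
  makes \<open>(x, y) \<mapsto> x y mod W\<close> a nondegenerate pairing on F, so \<open>U \<mapsto> U\<^sup>\<bottom>\<close> reverses
  inclusions and complements dimensions. Following Hamidoune's isoperimetric method, call a nonzero
  subspace A with \<open>\<langle>AB\<rangle> \<noteq> F\<close> a fragment, \<open>dim \<langle>AB\<rangle> - dim A\<close> its boundary, \<open>\<kappa>\<close> the least
  boundary and an atom a fragment of boundary \<open>\<kappa>\<close> and least dimension. The duality
  \<open>A \<mapsto> \<langle>AB\<rangle>\<^sup>\<bottom>\<close> bounds atoms by \<open>2 dim A + \<kappa> \<le> dim F\<close>, which lets submodularity show that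
  atoms meeting nontrivially coincide; hence an atom through 1 is a subfield H. As B generates F,
  some b in B lies outside H, and \<open>H \<oplus> bH \<subseteq> \<langle>HB\<rangle>\<close> gives \<open>dim B \<le> 2\<kappa>\<close>. Every step of the chain
  \<open>\<langle>B\<^sup>k\<rangle>\<close> below F gains at least \<open>\<kappa>\<close> dimensions, so \<open>dim B + (n - 2)\<kappa> < dim F\<close>, and
  \<open>n dim B \<le> 2 dim F\<close> follows.\<close>

section \<open>Subspaces of a finite extension\<close>

locale finite_field_ext = field R for R (structure) +
  fixes K assumes K: "subfield K R" and finite_dim: "finite_dimension K (carrier R)"
begin

declare Span.simps[simp del]

text \<open>In HOL-Algebra, \<open>subalgebra K V R\<close> only asks V to be a K-subspace of R.\<close>

abbreviation ksubspace :: "'a set \<Rightarrow> bool" where "ksubspace V \<equiv> subalgebra K V R"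

lemma K_carrier: "K \<subseteq> carrier R"
  using subfieldE(3)[OF K] .

lemma one_in_K: "\<one> \<in> K"
  using subringE(3)[OF subfieldE(1)[OF K]] .

lemma dim_eqI: "dimension n K E \<Longrightarrow> dim K E = n"
  using dimI[OF K] unfolding over_def by blast

lemma ksubspace_carrier: "ksubspace V \<Longrightarrow> V \<subseteq> carrier R"
  using subalgebra_in_carrier by blast

lemma ksubspace_finite_dimension: "ksubspace V \<Longrightarrow> finite_dimension K V"
  using subalbegra_incl_imp_finite_dimension[OF K finite_dim] ksubspace_carrier by blast

lemma ksubspace_dimension: "ksubspace V \<Longrightarrow> dimension (dim K V) K V"
  using finite_dimensionE[OF K ksubspace_finite_dimension] unfolding over_def .

lemma ksubspace_zero: "ksubspace V \<Longrightarrow> \<zero> \<in> V"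
  using subalgebra.axioms(1) subgroup.one_closed by fastforce

lemma ksubspace_add: "ksubspace V \<Longrightarrow> x \<in> V \<Longrightarrow> y \<in> V \<Longrightarrow> x \<oplus> y \<in> V"
  using subalgebra.axioms(1) subgroup.m_closed by fastforce

lemma ksubspace_neg: "ksubspace V \<Longrightarrow> x \<in> V \<Longrightarrow> \<ominus> x \<in> V"
  using space_subgroup_props(4)[OF K ksubspace_dimension] by blast

lemma ksubspace_minus: "ksubspace V \<Longrightarrow> x \<in> V \<Longrightarrow> y \<in> V \<Longrightarrow> x \<ominus> y \<in> V"
  unfolding a_minus_def using ksubspace_add ksubspace_neg by blast

lemma ksubspace_smult: "ksubspace V \<Longrightarrow> k \<in> K \<Longrightarrow> x \<in> V \<Longrightarrow> k \<otimes> x \<in> V"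
  by (rule subalgebra.smult_closed)

lemma ksubspaceI:
  assumes "V \<subseteq> carrier R" "\<zero> \<in> V" "\<And>x y. x \<in> V \<Longrightarrow> y \<in> V \<Longrightarrow> x \<oplus> y \<in> V"
    and "\<And>k x. k \<in> K \<Longrightarrow> x \<in> V \<Longrightarrow> k \<otimes> x \<in> V"
  shows "ksubspace V"
proof -
  have "\<ominus> \<one> \<in> K"
    using subringE(5)[OF subfieldE(1)[OF K]] one_in_K by blast
  then have "\<ominus> x \<in> V" if "x \<in> V" for x
    using assms(4)[of "\<ominus> \<one>" x] assms(1) that by (simp add: l_minus subsetD)
  then have "subgroup V (add_monoid R)"
    using add.subgroupI[OF assms(1)] assms(2,3) by auto
  then show ?thesis
    using assms(4) unfolding subalgebra_def subalgebra_axioms_def by auto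
qed

lemma K_ksubspace: "ksubspace K"
  by (rule ksubspaceI) (auto simp: K_carrier subringE[OF subfieldE(1)[OF K]])

lemma subring_ksubspace: assumes "subring F R" "K \<subseteq> F" shows "ksubspace F"
proof (rule ksubspaceI)
  note F = subringE[OF assms(1)]
  show "F \<subseteq> carrier R" "\<zero> \<in> F"
    using F(1,2) .
  show "x \<oplus> y \<in> F" if "x \<in> F" "y \<in> F" for x y
    using F(7) that .
  show "k \<otimes> x \<in> F" if "k \<in> K" "x \<in> F" for k x
    using F(6) assms(2) that by blast
qed

lemma subfield_ksubspace: "subfield F R \<Longrightarrow> K \<subseteq> F \<Longrightarrow> ksubspace F"
  using subring_ksubspace subfieldE(1) by blast

lemma K_subset_ksubspace: "ksubspace V \<Longrightarrow> \<one> \<in> V \<Longrightarrow> K \<subseteq> V"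
  using ksubspace_smult[of V _ \<one>] K_carrier by (auto simp: subsetD)

lemma dim_K: "dim K K = 1"
  using dim_eqI[OF dimension_one[OF K]] .

lemma dim_mono:
  assumes "ksubspace V" "ksubspace W" "V \<subseteq> W"
  shows "dim K V \<le> dim K W"
proof -
  obtain Us where Us: "set Us \<subseteq> carrier R" "independent K Us" "length Us = dim K V" "Span K Us = V"
    using exists_base[OF K ksubspace_dimension[OF assms(1)]] by blast
  then have "set Us \<subseteq> W"
    using Span_base_incl[OF K Us(1)] assms(3) by blast
  then show ?thesis
    using independent_length_le_dimension[OF K ksubspace_dimension[OF assms(2)] Us(2)] Us(3) by simp
qed

lemma dim_seteq:
  assumes "ksubspace V" "ksubspace W" "V \<subseteq> W" "dim K W \<le> dim K V"
  shows "V = W"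
proof -
  obtain Us where Us: "set Us \<subseteq> carrier R" "independent K Us" "length Us = dim K V" "Span K Us = V"
    using exists_base[OF K ksubspace_dimension[OF assms(1)]] by blast
  have "set Us \<subseteq> W"
    using Span_base_incl[OF K Us(1)] Us(4) assms(3) by blast
  moreover have "length Us = dim K W"
    using dim_mono[OF assms(1-3)] assms(4) Us(3) by simp
  ultimately show ?thesis
    using independent_length_eq_dimension[OF K ksubspace_dimension[OF assms(2)] Us(2)] Us(4) by simp
qed

lemma dim_psubset:
  assumes "ksubspace V" "ksubspace W" "V \<subseteq> W" "V \<noteq> W"
  shows "dim K V < dim K W"
proof -
  have "\<not> dim K W \<le> dim K V"
    using dim_seteq[OF assms(1-3)] assms(4) by blast
  then show ?thesis by simp
qed

lemma dim_eq_0_iff: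
  assumes "ksubspace V"
  shows "dim K V = 0 \<longleftrightarrow> V = {\<zero>}"
proof
  assume "dim K V = 0"
  then show "V = {\<zero>}"
    using ksubspace_dimension[OF assms] dimension_zero[OF K] by metis
next
  assume "V = {\<zero>}"
  then show "dim K V = 0"
    using dim_eqI[OF zero_dim] by simp
qed

lemma dim_le_dim_carrier: "ksubspace V \<Longrightarrow> dim K V \<le> dim K (carrier R)"
  using dim_mono carrier_is_subalgebra[OF K_carrier] ksubspace_carrier by blast

lemma dim_Span_le_length: "set Us \<subseteq> carrier R \<Longrightarrow> dim K (Span K Us) \<le> length Us"
proof (induct Us)
  case Nil
  then show ?case using dim_eqI[OF zero_dim] by (simp add: Span.simps)
next
  case (Cons u Us)
  then have u: "u \<in> carrier R" and Us: "set Us \<subseteq> carrier R" by auto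
  show ?case
  proof (cases "u \<in> Span K Us")
    case True
    then have "Span K (u # Us) = Span K Us"
      using mono_Span[OF K Us u] mono_Span_subset[OF K _ Us, of "u # Us"]
        Span_base_incl[OF K Us] by auto
    then show ?thesis using Cons(1)[OF Us] by simp
  next
    case False
    then have "dim K (Span K (u # Us)) = Suc (dim K (Span K Us))"
      using Suc_dim[OF u False ksubspace_dimension[OF Span_is_subalgebra[OF K Us]]] dim_eqI
      by (simp add: Span.simps)
    then show ?thesis using Cons(1)[OF Us] by simp
  qed
qed

lemma set_add_ksubspace: "ksubspace V \<Longrightarrow> ksubspace W \<Longrightarrow> ksubspace (V <+>\<^bsub>R\<^esub> W)"
  using sum_space_dim(1)[OF K ksubspace_finite_dimension ksubspace_finite_dimension]
    finite_dimension_imp_subalgebra[OF K] by blast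

lemma dim_set_add_inter:
  assumes "ksubspace V" "ksubspace W"
  shows "dim K (V <+>\<^bsub>R\<^esub> W) + dim K (V \<inter> W) = dim K V + dim K W"
proof -
  have fd: "finite_dimension K V" "finite_dimension K W"
    using ksubspace_finite_dimension assms by blast+
  have "dim K (V \<inter> W) \<le> dim K V"
    using dim_mono subalgebra_inter assms by blast
  then show ?thesis
    using sum_space_dim(2)[OF K fd] unfolding over_def by simp
qed

lemma dim_set_add_le:
  "ksubspace V \<Longrightarrow> ksubspace W \<Longrightarrow> dim K (V <+>\<^bsub>R\<^esub> W) \<le> dim K V + dim K W"
  using dim_set_add_inter by fastforce

lemma set_add_memI: "x \<in> V \<Longrightarrow> y \<in> W \<Longrightarrow> x \<oplus> y \<in> V <+>\<^bsub>R\<^esub> W"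
  unfolding set_add_def' by blast

lemma set_add_memE: "z \<in> V <+>\<^bsub>R\<^esub> W \<Longrightarrow> (\<And>x y. x \<in> V \<Longrightarrow> y \<in> W \<Longrightarrow> z = x \<oplus> y \<Longrightarrow> P) \<Longrightarrow> P"
  unfolding set_add_def' by blast

lemma set_add_upper1: "ksubspace V \<Longrightarrow> ksubspace W \<Longrightarrow> V \<subseteq> V <+>\<^bsub>R\<^esub> W"
proof
  fix x assume "ksubspace V" "ksubspace W" "x \<in> V"
  then have "x \<oplus> \<zero> \<in> V <+>\<^bsub>R\<^esub> W"
    using set_add_memI ksubspace_zero by blast
  then show "x \<in> V <+>\<^bsub>R\<^esub> W"
    using \<open>x \<in> V\<close> ksubspace_carrier[OF \<open>ksubspace V\<close>] by auto
qed

lemma set_add_upper2: "ksubspace V \<Longrightarrow> ksubspace W \<Longrightarrow> W \<subseteq> V <+>\<^bsub>R\<^esub> W"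
proof
  fix x assume "ksubspace V" "ksubspace W" "x \<in> W"
  then have "\<zero> \<oplus> x \<in> V <+>\<^bsub>R\<^esub> W"
    using set_add_memI ksubspace_zero by blast
  then show "x \<in> V <+>\<^bsub>R\<^esub> W"
    using \<open>x \<in> W\<close> ksubspace_carrier[OF \<open>ksubspace W\<close>] by auto
qed

lemma set_add_least:
  assumes "ksubspace U" "V \<subseteq> U" "W \<subseteq> U"
  shows "V <+>\<^bsub>R\<^esub> W \<subseteq> U"
proof
  fix z assume "z \<in> V <+>\<^bsub>R\<^esub> W"
  then obtain x y where "x \<in> V" "y \<in> W" "z = x \<oplus> y"
    by (rule set_add_memE)
  then show "z \<in> U"
    using ksubspace_add[OF assms(1)] assms(2,3) by blast
qed

lemma span_set_ksubspace:
  assumes "S \<subseteq> carrier R"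
  shows "ksubspace (span_set K S)"
proof (rule ksubspaceI)
  show "span_set K S \<subseteq> carrier R"
    unfolding span_set_def using Span_in_carrier[OF K_carrier] assms by blast
  have "Span K [] = {\<zero>}"
    by (simp add: Span.simps)
  then show "\<zero> \<in> span_set K S"
    unfolding span_set_def by force
next
  fix x y assume "x \<in> span_set K S" "y \<in> span_set K S"
  then obtain Us Vs where U: "set Us \<subseteq> S" "x \<in> Span K Us" and V: "set Vs \<subseteq> S" "y \<in> Span K Vs"
    unfolding span_set_def by blast
  have c: "set Us \<subseteq> carrier R" "set Vs \<subseteq> carrier R" "set (Us @ Vs) \<subseteq> carrier R"
    using U V assms by auto
  have "x \<in> Span K (Us @ Vs)" "y \<in> Span K (Us @ Vs)"
    using mono_Span_append(1)[OF K c(1,2)] mono_Span_append(2)[OF K c(2,1)] U(2) V(2) by blast+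
  then have "x \<oplus> y \<in> Span K (Us @ Vs)"
    using Span_subgroup_props(3)[OF K c(3)] by blast
  moreover have "set (Us @ Vs) \<subseteq> S"
    using U V by simp
  ultimately show "x \<oplus> y \<in> span_set K S"
    unfolding span_set_def by blast
next
  fix k x assume "k \<in> K" "x \<in> span_set K S"
  then obtain Us where U: "set Us \<subseteq> S" "x \<in> Span K Us"
    unfolding span_set_def by blast
  then have "k \<otimes> x \<in> Span K Us"
    using Span_smult_closed[OF K] assms \<open>k \<in> K\<close> by blast
  then show "k \<otimes> x \<in> span_set K S"
    using U unfolding span_set_def by blast
qed

lemma span_set_superset:
  assumes "S \<subseteq> carrier R"
  shows "S \<subseteq> span_set K S"
proof
  fix x assume "x \<in> S"
  then have "x \<in> Span K [x]" "set [x] \<subseteq> S"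
    using Span_base_incl[OF K, of "[x]"] assms by auto
  then show "x \<in> span_set K S"
    unfolding span_set_def by blast
qed

lemma span_set_least: "ksubspace V \<Longrightarrow> S \<subseteq> V \<Longrightarrow> span_set K S \<subseteq> V"
  unfolding span_set_def using subalgebra_Span_incl[OF K] by blast

lemma mult_preimage_ksubspace:
  assumes "ksubspace W" "c \<in> carrier R"
  shows "ksubspace {v \<in> carrier R. c \<otimes> v \<in> W}"
proof (rule ksubspaceI)
  show "\<zero> \<in> {v \<in> carrier R. c \<otimes> v \<in> W}"
    using assms ksubspace_zero by simp
next
  fix x y assume "x \<in> {v \<in> carrier R. c \<otimes> v \<in> W}" "y \<in> {v \<in> carrier R. c \<otimes> v \<in> W}"
  then show "x \<oplus> y \<in> {v \<in> carrier R. c \<otimes> v \<in> W}"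
    using ksubspace_add[OF assms(1)] assms(2) by (simp add: r_distr)
next
  fix k x assume k: "k \<in> K" and x: "x \<in> {v \<in> carrier R. c \<otimes> v \<in> W}"
  then have "c \<otimes> (k \<otimes> x) = k \<otimes> (c \<otimes> x)"
    using K_carrier assms(2) m_lcomm by auto
  then show "k \<otimes> x \<in> {v \<in> carrier R. c \<otimes> v \<in> W}"
    using ksubspace_smult[OF assms(1) k] k x K_carrier by auto
qed auto

definition dilate :: "'a \<Rightarrow> 'a set \<Rightarrow> 'a set" where
  "dilate c V = (\<lambda>v. c \<otimes> v) ` V"

lemma dilate_memI: "v \<in> V \<Longrightarrow> c \<otimes> v \<in> dilate c V"
  unfolding dilate_def by blast

lemma dilate_ksubspace:
  assumes "ksubspace V" "c \<in> carrier R"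
  shows "ksubspace (dilate c V)"
proof (rule ksubspaceI)
  have V: "V \<subseteq> carrier R"
    using ksubspace_carrier[OF assms(1)] .
  then show "dilate c V \<subseteq> carrier R"
    unfolding dilate_def using assms(2) by auto
  show "\<zero> \<in> dilate c V"
    using dilate_memI[OF ksubspace_zero[OF assms(1)], of c] assms(2) by simp
next
  fix x y assume "x \<in> dilate c V" "y \<in> dilate c V"
  then obtain x' y' where "x' \<in> V" "y' \<in> V" "x = c \<otimes> x'" "y = c \<otimes> y'"
    unfolding dilate_def by blast
  moreover have "c \<otimes> (x' \<oplus> y') = c \<otimes> x' \<oplus> c \<otimes> y'"
    using calculation ksubspace_carrier[OF assms(1)] assms(2) by (simp add: r_distr subsetD)
  ultimately show "x \<oplus> y \<in> dilate c V"
    using dilate_memI ksubspace_add[OF assms(1)] by metis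
next
  fix k x assume k: "k \<in> K" and "x \<in> dilate c V"
  then obtain x' where x': "x' \<in> V" "x = c \<otimes> x'"
    unfolding dilate_def by blast
  then have "k \<otimes> x = c \<otimes> (k \<otimes> x')"
    using k K_carrier assms(2) ksubspace_carrier[OF assms(1)] m_lcomm by (simp add: subsetD)
  then show "k \<otimes> x \<in> dilate c V"
    using dilate_memI ksubspace_smult[OF assms(1) k x'(1)] by metis
qed

lemma dilate_subset_iff:
  "ksubspace V \<Longrightarrow> dilate c V \<subseteq> W \<longleftrightarrow> V \<subseteq> {v \<in> carrier R. c \<otimes> v \<in> W}"
  unfolding dilate_def using ksubspace_carrier by blast

lemma dim_dilate_le:
  assumes "ksubspace V" "c \<in> carrier R"
  shows "dim K (dilate c V) \<le> dim K V"
proof -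
  obtain Us where Us: "set Us \<subseteq> carrier R" "length Us = dim K V" "Span K Us = V"
    using exists_base[OF K ksubspace_dimension[OF assms(1)]] by blast
  let ?Vs = "map (\<lambda>v. c \<otimes> v) Us"
  have Vs: "set ?Vs \<subseteq> carrier R"
    using Us(1) assms(2) by auto
  have "set Us \<subseteq> {v \<in> carrier R. c \<otimes> v \<in> Span K ?Vs}"
    using Span_base_incl[OF K Vs] Us(1) by auto
  then have "V \<subseteq> {v \<in> carrier R. c \<otimes> v \<in> Span K ?Vs}"
    using subalgebra_Span_incl[OF K mult_preimage_ksubspace[OF Span_is_subalgebra[OF K Vs] assms(2)]]
      Us(3) by blast
  then have "dilate c V \<subseteq> Span K ?Vs"
    using dilate_subset_iff[OF assms(1)] by blast
  then have "dim K (dilate c V) \<le> dim K (Span K ?Vs)"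
    using dim_mono[OF dilate_ksubspace[OF assms] Span_is_subalgebra[OF K Vs]] by blast
  also have "\<dots> \<le> dim K V"
    using dim_Span_le_length[OF Vs] Us(2) by simp
  finally show ?thesis .
qed

lemma dilate_dilate:
  assumes "V \<subseteq> carrier R" "c \<in> carrier R" "d \<in> carrier R"
  shows "dilate d (dilate c V) = dilate (d \<otimes> c) V"
  unfolding dilate_def using assms m_assoc by (auto simp: image_iff subsetD)

lemma dilate_one: "V \<subseteq> carrier R \<Longrightarrow> dilate \<one> V = V"
  unfolding dilate_def by (auto simp: subsetD)

lemma dim_dilate:
  assumes "ksubspace V" "c \<in> carrier R" "c \<noteq> \<zero>"
  shows "dim K (dilate c V) = dim K V"
proof -
  have "inv c \<in> carrier R" "inv c \<otimes> c = \<one>"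
    using assms(2,3) field_Units by auto
  then have "dilate (inv c) (dilate c V) = V"
    using dilate_dilate dilate_one ksubspace_carrier[OF assms(1)] assms(2) by simp
  then show ?thesis
    using dim_dilate_le[OF dilate_ksubspace[OF assms(1,2)] \<open>inv c \<in> carrier R\<close>]
      dim_dilate_le[OF assms(1,2)] by simp
qed

lemma subfield_inter_dilate:
  assumes H: "subfield H R" and b: "b \<in> carrier R" "b \<notin> H"
  shows "H \<inter> dilate b H = {\<zero>}"
proof -
  have Hc: "H \<subseteq> carrier R" and zero: "\<zero> \<in> H"
    using subfieldE(3)[OF H] subringE(2)[OF subfieldE(1)[OF H]] by auto
  have "v = \<zero>" if v: "v \<in> H" "v \<in> dilate b H" for v
  proof (rule ccontr)
    assume "v \<noteq> \<zero>"
    obtain h where h: "h \<in> H" "v = b \<otimes> h"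
      using v(2) unfolding dilate_def by blast
    then have "h \<noteq> \<zero>"
      using \<open>v \<noteq> \<zero>\<close> b(1) by auto
    then have "inv h \<in> H" "h \<otimes> inv h = \<one>" "inv h \<in> carrier R" "h \<in> carrier R"
      using subfield_m_inv(1,2)[OF H] h(1) Hc by auto
    then have "v \<otimes> inv h = b"
      using h(2) b(1) m_assoc by simp
    moreover have "v \<otimes> inv h \<in> H"
      using subringE(6)[OF subfieldE(1)[OF H]] v(1) \<open>inv h \<in> H\<close> by blast
    ultimately show False
      using b(2) by simp
  qed
  moreover have "\<zero> \<in> dilate b H"
    using dilate_memI[OF zero, of b] b(1) by simp
  ultimately show ?thesis
    using zero by blast
qed

lemma subfield_if_dilates_absorb:
  assumes H: "ksubspace H" "\<one> \<in> H"
    and absorb: "\<And>h. h \<in> H \<Longrightarrow> h \<noteq> \<zero> \<Longrightarrow> H \<subseteq> dilate h H"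
  shows "subfield H R"
proof -
  have Hc: "H \<subseteq> carrier R"
    using ksubspace_carrier[OF H(1)] .
  have inv: "inv h \<in> H" if h: "h \<in> H" "h \<noteq> \<zero>" for h
  proof -
    obtain h' where h': "h' \<in> H" "\<one> = h \<otimes> h'"
      using absorb[OF h] H(2) unfolding dilate_def by blast
    then have "inv h = h'"
      using comm_inv_char[of h h'] h(1) Hc by auto
    then show ?thesis
      using h'(1) by simp
  qed
  have mult: "h1 \<otimes> h2 \<in> H" if h: "h1 \<in> H" "h2 \<in> H" for h1 h2
  proof (cases "h2 = \<zero>")
    case True
    then show ?thesis
      using h Hc ksubspace_zero[OF H(1)] by (auto simp: subsetD)
  next
    case False
    then have c: "h1 \<in> carrier R" "h2 \<in> carrier R" "inv h2 \<in> carrier R" "h2 \<otimes> inv h2 = \<one>"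
      using h Hc field_Units by auto
    then have "inv h2 \<noteq> \<zero>"
      by auto
    then obtain h3 where h3: "h3 \<in> H" "h1 = inv h2 \<otimes> h3"
      using absorb[OF inv[OF h(2) False]] h(1) unfolding dilate_def by blast
    have "h3 \<in> carrier R"
      using h3(1) Hc by blast
    then have "h1 \<otimes> h2 = (h2 \<otimes> inv h2) \<otimes> h3"
      using h3(2) c(1-3) by algebra
    also have "\<dots> = h3"
      using c(4) \<open>h3 \<in> carrier R\<close> by simp
    finally show ?thesis
      using h3(1) by simp
  qed
  show ?thesis
  proof (rule subfieldI'[OF subringI])
    show "H \<subseteq> carrier R" "\<one> \<in> H"
      using Hc H(2) .
    show "\<ominus> h \<in> H" if "h \<in> H" for h
      using ksubspace_neg[OF H(1) that] .
    show "h1 \<oplus> h2 \<in> H" if "h1 \<in> H" "h2 \<in> H" for h1 h2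
      using ksubspace_add[OF H(1) that] .
  qed (use mult inv in auto)
qed

section \<open>Products of subspaces\<close>

definition span_mult :: "'a set \<Rightarrow> 'a set \<Rightarrow> 'a set" where
  "span_mult A Y = span_set K {x \<otimes> y | x y. x \<in> A \<and> y \<in> Y}"

lemma span_mult_ksubspace: "A \<subseteq> carrier R \<Longrightarrow> Y \<subseteq> carrier R \<Longrightarrow> ksubspace (span_mult A Y)"
  unfolding span_mult_def by (rule span_set_ksubspace) blast

lemma span_mult_memI:
  assumes "A \<subseteq> carrier R" "Y \<subseteq> carrier R" "x \<in> A" "y \<in> Y"
  shows "x \<otimes> y \<in> span_mult A Y"
  unfolding span_mult_def using span_set_superset[of "{x \<otimes> y | x y. x \<in> A \<and> y \<in> Y}"] assms
  by blast

lemma span_mult_least: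
  assumes "ksubspace V" "\<And>x y. x \<in> A \<Longrightarrow> y \<in> Y \<Longrightarrow> x \<otimes> y \<in> V"
  shows "span_mult A Y \<subseteq> V"
  unfolding span_mult_def using assms by (intro span_set_least) blast+

lemma span_mult_mono:
  assumes "A \<subseteq> A'" "Y \<subseteq> Y'" "A' \<subseteq> carrier R" "Y' \<subseteq> carrier R"
  shows "span_mult A Y \<subseteq> span_mult A' Y'"
  using assms span_mult_memI by (intro span_mult_least span_mult_ksubspace) blast+

lemma span_mult_commute:
  assumes "A \<subseteq> carrier R" "Y \<subseteq> carrier R"
  shows "span_mult A Y = span_mult Y A"
proof -
  have "{x \<otimes> y | x y. x \<in> A \<and> y \<in> Y} = {y \<otimes> x | y x. y \<in> Y \<and> x \<in> A}"
    using assms m_comm by blast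
  then show ?thesis
    unfolding span_mult_def by simp
qed

lemma span_mult_superset:
  assumes "ksubspace A" "Y \<subseteq> carrier R" "\<one> \<in> Y"
  shows "A \<subseteq> span_mult A Y"
proof
  fix x assume "x \<in> A"
  then show "x \<in> span_mult A Y"
    using span_mult_memI[OF ksubspace_carrier[OF assms(1)] assms(2) _ assms(3)]
      ksubspace_carrier[OF assms(1)] by force
qed

lemma dilate_subset_span_mult:
  assumes "A \<subseteq> carrier R" "Y \<subseteq> carrier R" "b \<in> Y"
  shows "dilate b A \<subseteq> span_mult A Y"
proof
  fix v assume "v \<in> dilate b A"
  then obtain a where a: "a \<in> A" "v = b \<otimes> a"
    unfolding dilate_def by blast
  then have "v = a \<otimes> b"
    using m_comm assms by blast
  then show "v \<in> span_mult A Y"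
    using span_mult_memI[OF assms(1,2) a(1) assms(3)] by simp
qed

lemma span_mult_K: "ksubspace B \<Longrightarrow> span_mult K B = B"
  using span_mult_least[of B K B] ksubspace_smult span_mult_superset[OF _ K_carrier one_in_K]
    span_mult_commute[OF K_carrier ksubspace_carrier] by blast

lemma span_mult_set_add:
  assumes "ksubspace A" "ksubspace A'" "Y \<subseteq> carrier R"
  shows "span_mult (A <+>\<^bsub>R\<^esub> A') Y = span_mult A Y <+>\<^bsub>R\<^esub> span_mult A' Y"
proof
  have c: "A \<subseteq> carrier R" "A' \<subseteq> carrier R" "A <+>\<^bsub>R\<^esub> A' \<subseteq> carrier R"
    using ksubspace_carrier assms set_add_ksubspace by blast+
  show "span_mult (A <+>\<^bsub>R\<^esub> A') Y \<subseteq> span_mult A Y <+>\<^bsub>R\<^esub> span_mult A' Y"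
  proof (rule span_mult_least)
    show "ksubspace (span_mult A Y <+>\<^bsub>R\<^esub> span_mult A' Y)"
      using set_add_ksubspace span_mult_ksubspace c assms(3) by blast
    fix z y assume z: "z \<in> A <+>\<^bsub>R\<^esub> A'" and y: "y \<in> Y"
    obtain x x' where x: "x \<in> A" "x' \<in> A'" "z = x \<oplus> x'"
      using z by (rule set_add_memE)
    then have "z \<otimes> y = x \<otimes> y \<oplus> x' \<otimes> y"
      using y c assms(3) by (simp add: l_distr subsetD)
    then show "z \<otimes> y \<in> span_mult A Y <+>\<^bsub>R\<^esub> span_mult A' Y"
      using set_add_memI[OF span_mult_memI[OF c(1) assms(3) x(1) y] span_mult_memI[OF c(2) assms(3) x(2) y]]
      by simp
  qed
  show "span_mult A Y <+>\<^bsub>R\<^esub> span_mult A' Y \<subseteq> span_mult (A <+>\<^bsub>R\<^esub> A') Y"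
    by (intro set_add_least span_mult_ksubspace span_mult_mono set_add_upper1 set_add_upper2
        c(3) assms order_refl)
qed

lemma span_mult_dilate:
  assumes "ksubspace A" "Y \<subseteq> carrier R" "c \<in> carrier R"
  shows "span_mult (dilate c A) Y = dilate c (span_mult A Y)"
proof
  have A: "A \<subseteq> carrier R"
    using ksubspace_carrier[OF assms(1)] .
  have cA: "dilate c A \<subseteq> carrier R"
    using ksubspace_carrier[OF dilate_ksubspace[OF assms(1,3)]] .
  show "span_mult (dilate c A) Y \<subseteq> dilate c (span_mult A Y)"
  proof (rule span_mult_least[OF dilate_ksubspace[OF span_mult_ksubspace[OF A assms(2)] assms(3)]])
    fix z y assume "z \<in> dilate c A" "y \<in> Y"
    then obtain x where x: "x \<in> A" "z = c \<otimes> x"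
      unfolding dilate_def by blast
    then have "z \<otimes> y = c \<otimes> (x \<otimes> y)"
      using \<open>y \<in> Y\<close> A assms(2,3) m_assoc by (simp add: subsetD)
    then show "z \<otimes> y \<in> dilate c (span_mult A Y)"
      using dilate_memI span_mult_memI[OF A assms(2) x(1) \<open>y \<in> Y\<close>] by metis
  qed
  have "span_mult A Y \<subseteq> {v \<in> carrier R. c \<otimes> v \<in> span_mult (dilate c A) Y}"
  proof (rule span_mult_least[OF mult_preimage_ksubspace[OF span_mult_ksubspace[OF cA assms(2)] assms(3)]])
    fix x y assume "x \<in> A" "y \<in> Y"
    moreover have "c \<otimes> (x \<otimes> y) = (c \<otimes> x) \<otimes> y"
      using \<open>x \<in> A\<close> \<open>y \<in> Y\<close> A assms(2,3) m_assoc by (simp add: subsetD)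
    ultimately show "x \<otimes> y \<in> {v \<in> carrier R. c \<otimes> v \<in> span_mult (dilate c A) Y}"
      using span_mult_memI[OF cA assms(2) dilate_memI] A assms(2) by auto
  qed
  then show "dilate c (span_mult A Y) \<subseteq> span_mult (dilate c A) Y"
    using dilate_subset_iff[OF span_mult_ksubspace[OF A assms(2)]] by blast
qed

section \<open>The chain of powers of a subspace\<close>

definition power_span :: "'a set \<Rightarrow> nat \<Rightarrow> 'a set" where
  "power_span B k = span_set K (prod_set B k)"

context
  fixes B
  assumes B: "ksubspace B" "\<one> \<in> B"
begin

lemma prod_set_carrier: "prod_set B k \<subseteq> carrier R"
  by (induct k) (use ksubspace_carrier[OF B(1)] in auto)

lemma power_span_ksubspace: "ksubspace (power_span B k)"
  unfolding power_span_def using span_set_ksubspace[OF prod_set_carrier] .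

lemma power_span_carrier: "power_span B k \<subseteq> carrier R"
  using ksubspace_carrier[OF power_span_ksubspace] .

lemma power_span_0: "power_span B 0 = K"
proof
  show "power_span B 0 \<subseteq> K"
    unfolding power_span_def by (rule span_set_least[OF K_ksubspace]) (simp add: one_in_K)
  have "\<one> \<in> power_span B 0"
    unfolding power_span_def using span_set_superset[OF prod_set_carrier, of 0] by simp
  then show "K \<subseteq> power_span B 0"
    using K_subset_ksubspace[OF power_span_ksubspace] by blast
qed

lemma power_span_Suc: "power_span B (Suc k) = span_mult (power_span B k) B"
proof
  have Bc: "B \<subseteq> carrier R"
    using ksubspace_carrier[OF B(1)] .
  show "power_span B (Suc k) \<subseteq> span_mult (power_span B k) B"
    unfolding power_span_def[of B "Suc k"]
  proof (rule span_set_least[OF span_mult_ksubspace[OF power_span_carrier Bc]], rule subsetI)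
    fix v assume "v \<in> prod_set B (Suc k)"
    then obtain b c where bc: "b \<in> B" "c \<in> prod_set B k" "v = b \<otimes> c"
      by auto
    then have "c \<in> power_span B k"
      unfolding power_span_def using span_set_superset[OF prod_set_carrier] by blast
    moreover have "v = c \<otimes> b"
      using bc m_comm Bc prod_set_carrier by blast
    ultimately show "v \<in> span_mult (power_span B k) B"
      using span_mult_memI[OF power_span_carrier Bc _ bc(1)] by simp
  qed
  show "span_mult (power_span B k) B \<subseteq> power_span B (Suc k)"
  proof (rule span_mult_least[OF power_span_ksubspace])
    fix x b assume x: "x \<in> power_span B k" and b: "b \<in> B"
    have bc: "b \<in> carrier R"
      using b Bc by blast
    have "prod_set B k \<subseteq> {v \<in> carrier R. b \<otimes> v \<in> power_span B (Suc k)}"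
    proof (rule subsetI, rule CollectI, rule conjI)
      fix c assume c: "c \<in> prod_set B k"
      then show "c \<in> carrier R"
        using prod_set_carrier by blast
      have "b \<otimes> c \<in> prod_set B (Suc k)"
        using b c by auto
      then show "b \<otimes> c \<in> power_span B (Suc k)"
        unfolding power_span_def using span_set_superset[OF prod_set_carrier] by blast
    qed
    then have "power_span B k \<subseteq> {v \<in> carrier R. b \<otimes> v \<in> power_span B (Suc k)}"
      unfolding power_span_def[of B k]
      by (rule span_set_least[OF mult_preimage_ksubspace[OF power_span_ksubspace bc]])
    then show "x \<otimes> b \<in> power_span B (Suc k)"
      using x m_comm[OF _ bc] power_span_carrier by (metis (no_types, lifting) mem_Collect_eq subsetD)
  qed
qed

lemma power_span_1: "power_span B 1 = B"
  using power_span_Suc[of 0] power_span_0 span_mult_K[OF B(1)] by simp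

lemma power_span_subset_Suc: "power_span B k \<subseteq> power_span B (Suc k)"
  using power_span_Suc span_mult_superset[OF power_span_ksubspace ksubspace_carrier[OF B(1)] B(2)]
  by simp

lemma power_span_mono: "k \<le> j \<Longrightarrow> power_span B k \<subseteq> power_span B j"
  using lift_Suc_mono_le[of "power_span B", OF power_span_subset_Suc] .

lemma one_in_power_span: "\<one> \<in> power_span B k"
  using power_span_mono[of 0 k] power_span_0 one_in_K by auto

lemma power_span_subset_subring:
  assumes "subring H R" "K \<subseteq> H" "B \<subseteq> H"
  shows "power_span B k \<subseteq> H"
proof (induct k)
  case 0
  then show ?case
    using power_span_0 assms(2) by simp
next
  case (Suc k)
  then show ?case
    unfolding power_span_Suc
    using span_mult_least[OF subring_ksubspace[OF assms(1,2)]] subringE(6)[OF assms(1)] assms(3)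
    by blast
qed

text \<open>Once the chain stabilises, \<open>power_span B k\<close> is closed under multiplication, hence a finite
  dimensional domain over K, hence a field.\<close>

lemma power_span_stable_mult_closed:
  assumes stable: "power_span B (Suc k) = power_span B k" and x: "x \<in> power_span B k"
  shows "y \<in> power_span B j \<Longrightarrow> x \<otimes> y \<in> power_span B k"
proof (induct j arbitrary: y)
  case 0
  then show ?case
    using ksubspace_smult[OF power_span_ksubspace _ x] m_comm K_carrier power_span_carrier x
      power_span_0 by (metis subsetD)
next
  case (Suc j)
  have xc: "x \<in> carrier R"
    using x power_span_carrier by blast
  have "span_mult (power_span B j) B \<subseteq> {v \<in> carrier R. x \<otimes> v \<in> power_span B k}"
  proof (rule span_mult_least[OF mult_preimage_ksubspace[OF power_span_ksubspace xc]])
    fix s b assume s: "s \<in> power_span B j" and b: "b \<in> B"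
    have c: "s \<in> carrier R" "b \<in> carrier R"
      using s b power_span_carrier ksubspace_carrier[OF B(1)] by auto
    have "(x \<otimes> s) \<otimes> b \<in> span_mult (power_span B k) B"
      using span_mult_memI[OF power_span_carrier ksubspace_carrier[OF B(1)] Suc(1)[OF s] b] .
    then have "x \<otimes> (s \<otimes> b) \<in> power_span B k"
      using stable power_span_Suc[of k] m_assoc[OF xc c] by simp
    then show "s \<otimes> b \<in> {v \<in> carrier R. x \<otimes> v \<in> power_span B k}"
      using c by auto
  qed
  then show ?case
    using Suc(2) power_span_Suc by blast
qed

lemma power_span_stable_subfield:
  assumes stable: "power_span B (Suc k) = power_span B k"
  shows "subfield (power_span B k) R"
proof (rule subfield_if_dilates_absorb[OF power_span_ksubspace one_in_power_span])
  fix x assume x: "x \<in> power_span B k" "x \<noteq> \<zero>"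
  then have xc: "x \<in> carrier R"
    using power_span_carrier by blast
  have "dilate x (power_span B k) \<subseteq> power_span B k"
    unfolding dilate_def using power_span_stable_mult_closed[OF stable x(1)] by blast
  then have "dilate x (power_span B k) = power_span B k"
    using dim_seteq[OF dilate_ksubspace[OF power_span_ksubspace xc] power_span_ksubspace]
      dim_dilate[OF power_span_ksubspace xc x(2)] by simp
  then show "power_span B k \<subseteq> dilate x (power_span B k)"
    by simp
qed

lemma exists_power_span_stable: "\<exists>k\<ge>1. power_span B (Suc k) = power_span B k"
proof (rule ccontr)
  assume "\<not> ?thesis"
  then have grow: "power_span B (Suc k) \<noteq> power_span B k" if "k \<ge> 1" for k
    using that by blast
  have "Suc k \<le> dim K (power_span B (Suc k))" for k
  proof (induct k)
    case 0
    have "B \<noteq> {\<zero>}"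
      using B(2) one_not_zero by blast
    then show ?case
      using power_span_1 dim_eq_0_iff[OF B(1)] by simp
  next
    case (Suc k)
    have "dim K (power_span B (Suc k)) < dim K (power_span B (Suc (Suc k)))"
      using dim_psubset[OF power_span_ksubspace power_span_ksubspace power_span_subset_Suc]
        grow[of "Suc k"] by simp
    then show ?case
      using Suc by simp
  qed
  then have "Suc (dim K (carrier R)) \<le> dim K (carrier R)"
    using dim_le_dim_carrier[OF power_span_ksubspace] le_trans by blast
  then show False
    by simp
qed

end

section \<open>The pairing defined by a hyperplane\<close>

lemma exists_hyperplane_not_one:
  assumes "subfield F R" "K \<subseteq> F"
  obtains W where "ksubspace W" "W \<subseteq> F" "\<one> \<notin> W" "Suc (dim K W) = dim K F"
proof -
  have "\<one> \<in> F"
    using subringE(3)[OF subfieldE(1)[OF assms(1)]] .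
  moreover have ind: "independent K [\<one>]"
    using li_Cons[of \<one> K "[]"] by (simp add: Span.simps)
  ultimately obtain Vs where Vs: "length (Vs @ [\<one>]) = dim K F" "independent K (Vs @ [\<one>])"
      "Span K (Vs @ [\<one>]) = F"
    using complete_base[OF K ksubspace_dimension[OF subfield_ksubspace[OF assms]] ind] by auto
  have c: "set Vs \<subseteq> carrier R" "set [\<one>] \<subseteq> carrier R"
    using independent_in_carrier[OF Vs(2)] by auto
  show ?thesis
  proof
    show "ksubspace (Span K Vs)"
      using Span_is_subalgebra[OF K c(1)] .
    show "Span K Vs \<subseteq> F"
      using mono_Span_append(1)[OF K c] Vs(3) by simp
    have "\<one> \<in> Span K [\<one>]"
      using Span_base_incl[OF K c(2)] by simp
    then show "\<one> \<notin> Span K Vs"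
      using independent_split(3)[OF K Vs(2)] one_not_zero by blast
    show "Suc (dim K (Span K Vs)) = dim K F"
      using dim_eqI[OF dimension_independent[OF independent_split(2)[OF K Vs(2)]]] Vs(1) by simp
  qed
qed

end

locale field_hyperplane = finite_field_ext +
  fixes F W
  assumes F: "subfield F R" and K_subset_F: "K \<subseteq> F"
    and W: "ksubspace W" "W \<subseteq> F" "\<one> \<notin> W" "Suc (dim K W) = dim K F"
begin

lemma F_ksubspace: "ksubspace F"
  using subfield_ksubspace[OF F K_subset_F] .

lemma F_carrier: "F \<subseteq> carrier R"
  using subfieldE(3)[OF F] .

lemma F_mult: "x \<in> F \<Longrightarrow> y \<in> F \<Longrightarrow> x \<otimes> y \<in> F"
  using subringE(6)[OF subfieldE(1)[OF F]] by blast

lemma F_inv: "x \<in> F \<Longrightarrow> x \<noteq> \<zero> \<Longrightarrow> inv x \<in> F"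
  using subfield_m_inv(1)[OF F] by blast

lemma F_r_inv: "x \<in> F \<Longrightarrow> x \<noteq> \<zero> \<Longrightarrow> x \<otimes> inv x = \<one>"
  using subfield_m_inv(2)[OF F] by blast

definition orth :: "'a set \<Rightarrow> 'a set" where
  "orth U = {y \<in> F. \<forall>u \<in> U. y \<otimes> u \<in> W}"

lemma orth_subset_F: "orth U \<subseteq> F"
  unfolding orth_def by blast

lemma orth_ksubspace:
  assumes "U \<subseteq> carrier R"
  shows "ksubspace (orth U)"
proof (rule ksubspaceI)
  show "orth U \<subseteq> carrier R"
    using orth_subset_F F_carrier by blast
  show "\<zero> \<in> orth U"
    unfolding orth_def using ksubspace_zero[OF W(1)] ksubspace_zero[OF F_ksubspace] assms by auto
next
  fix x y assume "x \<in> orth U" "y \<in> orth U"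
  then show "x \<oplus> y \<in> orth U"
    unfolding orth_def using ksubspace_add[OF F_ksubspace] ksubspace_add[OF W(1)] F_carrier assms
    by (auto simp: l_distr subsetD)
next
  fix k x assume "k \<in> K" "x \<in> orth U"
  then show "k \<otimes> x \<in> orth U"
    unfolding orth_def using ksubspace_smult[OF F_ksubspace] ksubspace_smult[OF W(1)] F_carrier assms
      K_carrier by (auto simp: m_assoc subsetD)
qed

lemma orth_Span:
  assumes "set Us \<subseteq> carrier R"
  shows "orth (Span K Us) = orth (set Us)"
proof
  show "orth (Span K Us) \<subseteq> orth (set Us)"
    unfolding orth_def using Span_base_incl[OF K assms] by blast
  show "orth (set Us) \<subseteq> orth (Span K Us)"
  proof
    fix y assume y: "y \<in> orth (set Us)"
    then have "y \<in> carrier R" "set Us \<subseteq> {v \<in> carrier R. y \<otimes> v \<in> W}"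
      using F_carrier assms unfolding orth_def by auto
    then have "Span K Us \<subseteq> {v \<in> carrier R. y \<otimes> v \<in> W}"
      using subalgebra_Span_incl[OF K mult_preimage_ksubspace[OF W(1)]] by blast
    then show "y \<in> orth (Span K Us)"
      using y unfolding orth_def by blast
  qed
qed

lemma orth_F: "orth F = {\<zero>}"
proof -
  have "y = \<zero>" if "y \<in> orth F" for y
  proof (rule ccontr)
    assume "y \<noteq> \<zero>"
    moreover have "y \<in> F"
      using that orth_subset_F by blast
    ultimately have "y \<otimes> inv y \<in> W"
      using that F_inv unfolding orth_def by blast
    then show False
      using F_r_inv[OF \<open>y \<in> F\<close> \<open>y \<noteq> \<zero>\<close>] W(3) by simp
  qed
  then show ?thesis
    using ksubspace_zero[OF orth_ksubspace[OF F_carrier]] by blast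
qed

lemma hyperplane_set_add_line:
  assumes z: "z \<in> F" "z \<notin> W"
  shows "W <+>\<^bsub>R\<^esub> dilate z K = F"
proof -
  have zc: "z \<in> carrier R"
    using z F_carrier by blast
  have zK: "ksubspace (dilate z K)"
    using dilate_ksubspace[OF K_ksubspace zc] .
  have "W \<inter> dilate z K \<subseteq> {\<zero>}"
  proof
    fix v assume v: "v \<in> W \<inter> dilate z K"
    then obtain k where k: "k \<in> K" "v = z \<otimes> k"
      unfolding dilate_def by blast
    show "v \<in> {\<zero>}"
    proof (rule ccontr)
      assume "v \<notin> {\<zero>}"
      then have "k \<noteq> \<zero>"
        using k zc K_carrier by auto
      then have ik: "inv k \<in> K" "inv k \<otimes> k = \<one>" "inv k \<in> carrier R" "k \<in> carrier R"
        using subfield_m_inv[OF K] k K_carrier by auto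
      have "inv k \<otimes> v = z"
        using k(2) ik zc m_comm m_assoc by (metis l_one)
      then show False
        using ksubspace_smult[OF W(1) ik(1)] v z(2) by auto
    qed
  qed
  then have "W \<inter> dilate z K = {\<zero>}"
    using ksubspace_zero[OF W(1)] ksubspace_zero[OF zK] by blast
  moreover have "dim K (dilate z K) = 1"
    using dim_dilate[OF K_ksubspace zc] dim_K z ksubspace_zero[OF W(1)] by auto
  ultimately have "dim K (W <+>\<^bsub>R\<^esub> dilate z K) = dim K F"
    using dim_set_add_inter[OF W(1) zK] dim_eq_0_iff[OF subalgebra_inter[OF W(1) zK]] W(4) by simp
  moreover have "W <+>\<^bsub>R\<^esub> dilate z K \<subseteq> F"
    using set_add_least[OF F_ksubspace W(2)] z K_subset_F F_mult unfolding dilate_def by blast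
  ultimately show ?thesis
    using dim_seteq[OF set_add_ksubspace[OF W(1) zK] F_ksubspace] by simp
qed

lemma subset_inter_orth_add_line:
  assumes V: "ksubspace V" "V \<subseteq> F" and u: "u \<in> F" and v0: "v0 \<in> V" "v0 \<otimes> u \<notin> W"
  shows "V \<subseteq> (V \<inter> orth {u}) <+>\<^bsub>R\<^esub> dilate v0 K"
proof
  fix y assume y: "y \<in> V"
  have c: "v0 \<in> carrier R" "u \<in> carrier R" "v0 \<otimes> u \<in> F" "y \<in> carrier R" "y \<otimes> u \<in> F"
    using v0 y V u F_carrier F_mult by auto
  then have "y \<otimes> u \<in> W <+>\<^bsub>R\<^esub> dilate (v0 \<otimes> u) K"
    using hyperplane_set_add_line[OF c(3) v0(2)] by blast
  then obtain w k where wk: "w \<in> W" "k \<in> K" "y \<otimes> u = w \<oplus> (v0 \<otimes> u) \<otimes> k"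
    unfolding dilate_def by (auto elim!: set_add_memE)
  have kc: "k \<in> carrier R" "w \<in> carrier R"
    using wk K_carrier W(2) F_carrier by auto
  define y' where "y' = y \<ominus> k \<otimes> v0"
  have "y' \<otimes> u = w"
    unfolding y'_def using wk(3) kc c by algebra
  moreover have "y' \<in> V"
    unfolding y'_def using ksubspace_minus[OF V(1) y ksubspace_smult[OF V(1) wk(2) v0(1)]] .
  ultimately have "y' \<in> V \<inter> orth {u}"
    using wk(1) V(2) unfolding orth_def by auto
  moreover have "y = y' \<oplus> v0 \<otimes> k"
    unfolding y'_def using kc c by algebra
  ultimately show "y \<in> (V \<inter> orth {u}) <+>\<^bsub>R\<^esub> dilate v0 K"
    using set_add_memI dilate_memI[OF wk(2)] by metis
qed

lemma dim_le_dim_inter_orth_singleton: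
  assumes V: "ksubspace V" "V \<subseteq> F" and u: "u \<in> F"
  shows "dim K V \<le> dim K (V \<inter> orth {u}) + 1"
proof (cases "V \<subseteq> orth {u}")
  case True
  then show ?thesis by (simp add: Int_absorb2)
next
  case False
  then obtain v0 where v0: "v0 \<in> V" "v0 \<otimes> u \<notin> W"
    using V unfolding orth_def by blast
  then have v0c: "v0 \<in> carrier R"
    using V(2) F_carrier by blast
  have HV: "ksubspace (V \<inter> orth {u})"
    using subalgebra_inter[OF V(1) orth_ksubspace] u F_carrier by auto
  have lV: "ksubspace (dilate v0 K)"
    using dilate_ksubspace[OF K_ksubspace v0c] .
  have "dim K V \<le> dim K ((V \<inter> orth {u}) <+>\<^bsub>R\<^esub> dilate v0 K)"
    using dim_mono[OF V(1) set_add_ksubspace[OF HV lV] subset_inter_orth_add_line[OF V u v0]] .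
  also have "\<dots> \<le> dim K (V \<inter> orth {u}) + dim K (dilate v0 K)"
    using dim_set_add_le[OF HV lV] .
  also have "dim K (dilate v0 K) \<le> 1"
    using dim_dilate_le[OF K_ksubspace v0c] dim_K by simp
  finally show ?thesis by simp
qed

lemma dim_le_dim_inter_orth:
  assumes "set Us \<subseteq> F" "ksubspace V" "V \<subseteq> F"
  shows "dim K V \<le> dim K (V \<inter> orth (set Us)) + length Us"
  using assms
proof (induct Us arbitrary: V)
  case Nil
  then show ?case
    unfolding orth_def by (simp add: Int_absorb2 subset_iff)
next
  case (Cons u Us)
  have HV: "ksubspace (V \<inter> orth {u})"
    using subalgebra_inter[OF Cons(3) orth_ksubspace] Cons(2) F_carrier by auto
  have "dim K V \<le> dim K (V \<inter> orth {u}) + 1"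
    using dim_le_dim_inter_orth_singleton[OF Cons(3,4)] Cons(2) by simp
  also have "dim K (V \<inter> orth {u}) \<le> dim K ((V \<inter> orth {u}) \<inter> orth (set Us)) + length Us"
    using Cons(1)[OF _ HV] Cons(2,4) by auto
  also have "(V \<inter> orth {u}) \<inter> orth (set Us) = V \<inter> orth (set (u # Us))"
    unfolding orth_def by auto
  finally show ?case by simp
qed

lemma dim_orth:
  assumes "ksubspace U" "U \<subseteq> F"
  shows "dim K (orth U) + dim K U = dim K F"
proof -
  obtain Us where Us: "set Us \<subseteq> carrier R" "independent K Us" "length Us = dim K U" "Span K Us = U"
    using exists_base[OF K ksubspace_dimension[OF assms(1)]] by blast
  have UsF: "set Us \<subseteq> F"
    using Span_base_incl[OF K Us(1)] Us(4) assms(2) by blast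
  have orth_U: "orth U = orth (set Us)"
    using orth_Span[OF Us(1)] Us(4) by simp
  have "dim K F \<le> dim K (F \<inter> orth (set Us)) + length Us"
    using dim_le_dim_inter_orth[OF UsF F_ksubspace] by simp
  moreover have "F \<inter> orth (set Us) = orth U"
    using orth_U orth_subset_F by blast
  ultimately have "dim K F \<le> dim K (orth U) + dim K U"
    using Us(3) by simp
  moreover obtain Vs where Vs: "length (Vs @ Us) = dim K F" "independent K (Vs @ Us)"
      "Span K (Vs @ Us) = F"
    using complete_base[OF K ksubspace_dimension[OF F_ksubspace] Us(2) UsF] by blast
  moreover have "dim K (orth U) \<le> length Vs"
  proof -
    have VUc: "set (Vs @ Us) \<subseteq> carrier R"
      using independent_in_carrier[OF Vs(2)] .
    then have "orth U \<inter> orth (set Vs) = {\<zero>}"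
      using orth_Span[OF VUc] Vs(3) orth_F orth_U unfolding orth_def by auto
    moreover have "set Vs \<subseteq> F"
      using Span_base_incl[OF K VUc] Vs(3) by auto
    ultimately show ?thesis
      using dim_le_dim_inter_orth[OF _ orth_ksubspace orth_subset_F, of Vs U] dim_eqI[OF zero_dim]
        ksubspace_carrier[OF assms(1)] by simp
  qed
  ultimately show ?thesis
    using Us(3) by simp
qed

end

section \<open>Fragments and atoms\<close>

locale fragments = field_hyperplane +
  fixes B
  assumes B: "ksubspace B" "B \<subseteq> F" "\<one> \<in> B" "B \<noteq> F"
begin

lemma B_carrier: "B \<subseteq> carrier R"
  using B(2) F_carrier by blast

lemma span_mult_B_subset_F: "A \<subseteq> F \<Longrightarrow> span_mult A B \<subseteq> F"
  by (rule span_mult_least[OF F_ksubspace]) (use B(2) F_mult in blast)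

lemma span_mult_B_ksubspace: "A \<subseteq> F \<Longrightarrow> ksubspace (span_mult A B)"
  using span_mult_ksubspace[OF _ B_carrier] F_carrier by blast

definition fragment :: "'a set \<Rightarrow> bool" where
  "fragment A \<longleftrightarrow> ksubspace A \<and> A \<subseteq> F \<and> A \<noteq> {\<zero>} \<and> span_mult A B \<noteq> F"

definition boundary :: "'a set \<Rightarrow> nat" where
  "boundary A = dim K (span_mult A B) - dim K A"

definition connectivity :: nat where
  "connectivity = (LEAST k. \<exists>A. fragment A \<and> boundary A = k)"

definition atom_dim :: nat where
  "atom_dim = (LEAST d. \<exists>A. fragment A \<and> boundary A = connectivity \<and> dim K A = d)"

definition atom :: "'a set \<Rightarrow> bool" where
  "atom A \<longleftrightarrow> fragment A \<and> boundary A = connectivity \<and> dim K A = atom_dim"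

lemma fragmentD:
  assumes "fragment A"
  shows "ksubspace A" "A \<subseteq> F" "A \<noteq> {\<zero>}" "span_mult A B \<noteq> F"
  using assms unfolding fragment_def by auto

lemma dim_add_boundary:
  assumes "fragment A"
  shows "dim K A + boundary A = dim K (span_mult A B)"
  using dim_mono[OF fragmentD(1)[OF assms] span_mult_B_ksubspace[OF fragmentD(2)[OF assms]]
      span_mult_superset[OF fragmentD(1)[OF assms] B_carrier B(3)]]
  unfolding boundary_def by simp

lemma dim_span_mult_fragment_less:
  assumes "fragment A"
  shows "dim K (span_mult A B) < dim K F"
  using dim_psubset[OF span_mult_B_ksubspace F_ksubspace span_mult_B_subset_F] fragmentD[OF assms]
  by blast

lemma dim_fragment_pos: "fragment A \<Longrightarrow> 0 < dim K A"
  using dim_eq_0_iff fragmentD by blast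

lemma fragment_K: "fragment K"
  unfolding fragment_def
  using K_ksubspace K_subset_F span_mult_K[OF B(1)] B(4) one_in_K subfieldE(6)[OF K] by auto

lemma connectivity_le: "fragment A \<Longrightarrow> connectivity \<le> boundary A"
  unfolding connectivity_def by (rule Least_le) blast

lemma dim_add_connectivity_le: "fragment A \<Longrightarrow> dim K A + connectivity \<le> dim K (span_mult A B)"
  using connectivity_le dim_add_boundary by fastforce

lemma atom_dim_le: "fragment A \<Longrightarrow> boundary A = connectivity \<Longrightarrow> atom_dim \<le> dim K A"
  unfolding atom_dim_def by (rule Least_le) blast

lemma exists_atom: "\<exists>A. atom A"
proof -
  have "\<exists>A. fragment A \<and> boundary A = connectivity"
    unfolding connectivity_def by (rule LeastI_ex) (use fragment_K in blast)
  then have "\<exists>A. fragment A \<and> boundary A = connectivity \<and> dim K A = atom_dim"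
    unfolding atom_dim_def
    using LeastI_ex[of "\<lambda>d. \<exists>A. fragment A \<and> boundary A = connectivity \<and> dim K A = d"] by blast
  then show ?thesis
    unfolding atom_def .
qed

text \<open>The key duality: \<open>orth (span_mult A B)\<close> is again a fragment, because multiplying it by B
  lands in \<open>orth A\<close>, and its boundary is at most that of A.\<close>

lemma fragment_orth:
  assumes "fragment A"
  shows "fragment (orth (span_mult A B))" "boundary (orth (span_mult A B)) \<le> boundary A"
proof -
  note A = fragmentD[OF assms]
  let ?P = "span_mult A B"
  let ?Y = "orth ?P"
  have Ac: "A \<subseteq> carrier R"
    using A(2) F_carrier by blast
  have PV: "ksubspace ?P" and PF: "?P \<subseteq> F"
    using span_mult_B_ksubspace span_mult_B_subset_F A(2) by auto
  have YV: "ksubspace ?Y"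
    using orth_ksubspace[OF ksubspace_carrier[OF PV]] .
  have dY: "dim K ?Y + dim K ?P = dim K F"
    using dim_orth[OF PV PF] .
  have dA: "dim K (orth A) + dim K A = dim K F"
    using dim_orth[OF A(1,2)] .
  have sub: "span_mult ?Y B \<subseteq> orth A"
  proof (rule span_mult_least[OF orth_ksubspace[OF Ac]])
    fix y b assume y: "y \<in> ?Y" and b: "b \<in> B"
    have c: "y \<in> carrier R" "b \<in> carrier R" "y \<in> F" "b \<in> F"
      using y b orth_subset_F B(2) F_carrier by auto
    have "(y \<otimes> b) \<otimes> x \<in> W" if "x \<in> A" for x
    proof -
      have "y \<otimes> (x \<otimes> b) \<in> W"
        using y span_mult_memI[OF Ac B_carrier that b] unfolding orth_def by blast
      moreover have "(y \<otimes> b) \<otimes> x = y \<otimes> (x \<otimes> b)"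
        using c that Ac by (simp add: m_ac subsetD)
      ultimately show ?thesis by simp
    qed
    then show "y \<otimes> b \<in> orth A"
      unfolding orth_def using F_mult c by blast
  qed
  have le: "dim K (span_mult ?Y B) \<le> dim K (orth A)"
    using dim_mono[OF span_mult_B_ksubspace[OF orth_subset_F] orth_ksubspace[OF Ac] sub] .
  have "?Y \<noteq> {\<zero>}"
    using dY dim_span_mult_fragment_less[OF assms] dim_eq_0_iff[OF YV] by auto
  moreover have "span_mult ?Y B \<noteq> F"
    using le dA dim_fragment_pos[OF assms] by auto
  ultimately show "fragment ?Y"
    unfolding fragment_def using YV orth_subset_F by blast
  show "boundary ?Y \<le> boundary A"
    unfolding boundary_def using le dA dY dim_add_boundary[OF assms] by linarith
qed

lemma atom_dim_bound: "2 * atom_dim + connectivity \<le> dim K F"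
proof -
  obtain A where A: "atom A"
    using exists_atom by blast
  then have fA: "fragment A" "boundary A = connectivity" "dim K A = atom_dim"
    unfolding atom_def by auto
  have PV: "ksubspace (span_mult A B)" "span_mult A B \<subseteq> F"
    using span_mult_B_ksubspace span_mult_B_subset_F fragmentD(2)[OF fA(1)] by auto
  note Y = fragment_orth[OF fA(1)]
  have "boundary (orth (span_mult A B)) = connectivity"
    using Y connectivity_le fA(2) by (simp add: le_antisym)
  then have "atom_dim \<le> dim K (orth (span_mult A B))"
    using atom_dim_le Y(1) by blast
  then show ?thesis
    using dim_orth[OF PV] dim_add_boundary[OF fA(1)] fA by simp
qed

lemma atom_dilate:
  assumes "atom A" "c \<in> F" "c \<noteq> \<zero>"
  shows "atom (dilate c A)"
proof -
  have A: "fragment A" "boundary A = connectivity" "dim K A = atom_dim"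
    using assms(1) unfolding atom_def by auto
  note fA = fragmentD[OF A(1)]
  have c: "c \<in> carrier R"
    using assms(2) F_carrier by blast
  have cA: "ksubspace (dilate c A)" "dilate c A \<subseteq> F"
    using dilate_ksubspace[OF fA(1) c] fA(2) assms(2) F_mult unfolding dilate_def by auto
  have d: "dim K (dilate c A) = dim K A"
    using dim_dilate[OF fA(1) c assms(3)] .
  have dB: "dim K (span_mult (dilate c A) B) = dim K (span_mult A B)"
    using span_mult_dilate[OF fA(1) B_carrier c]
      dim_dilate[OF span_mult_B_ksubspace[OF fA(2)] c assms(3)] by simp
  have "dilate c A \<noteq> {\<zero>}"
    using d dim_eq_0_iff[OF cA(1)] dim_fragment_pos[OF A(1)] by simp
  moreover have "span_mult (dilate c A) B \<noteq> F"
    using dB dim_span_mult_fragment_less[OF A(1)] by auto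
  ultimately have "fragment (dilate c A)"
    unfolding fragment_def using cA by blast
  moreover have "boundary (dilate c A) = connectivity"
    using d dB A(2) unfolding boundary_def by simp
  ultimately show ?thesis
    unfolding atom_def using d A(3) by simp
qed

lemma fragment_inter:
  assumes "fragment A" "fragment A'" "A \<inter> A' \<noteq> {\<zero>}"
  shows "fragment (A \<inter> A')"
proof -
  note fA = fragmentD[OF assms(1)] and fA' = fragmentD[OF assms(2)]
  have "A \<subseteq> carrier R"
    using fA(2) F_carrier by blast
  then have "span_mult (A \<inter> A') B \<subseteq> span_mult A B"
    using span_mult_mono[OF Int_lower1 order_refl _ B_carrier] by blast
  then have "span_mult (A \<inter> A') B \<noteq> F"
    using span_mult_B_subset_F[OF fA(2)] fA(4) by blast
  moreover have "ksubspace (A \<inter> A')"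
    using subalgebra_inter[OF fA(1) fA'(1)] .
  ultimately show ?thesis
    unfolding fragment_def using fA(2) assms(3) by blast
qed

lemma dim_span_mult_submodular:
  assumes A: "ksubspace A" "A \<subseteq> F" and A': "ksubspace A'" "A' \<subseteq> F"
  shows "dim K (span_mult (A <+>\<^bsub>R\<^esub> A') B) + dim K (span_mult (A \<inter> A') B)
    \<le> dim K (span_mult A B) + dim K (span_mult A' B)"
proof -
  have PV: "ksubspace (span_mult A B)" "ksubspace (span_mult A' B)"
    using span_mult_B_ksubspace A(2) A'(2) by blast+
  have c: "A \<subseteq> carrier R" "A' \<subseteq> carrier R"
    using A(2) A'(2) F_carrier by auto
  have "span_mult (A \<inter> A') B \<subseteq> span_mult A B \<inter> span_mult A' B"
    using span_mult_mono[OF Int_lower1 order_refl c(1) B_carrier]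
      span_mult_mono[OF Int_lower2 order_refl c(2) B_carrier] by blast
  then have "dim K (span_mult (A \<inter> A') B) \<le> dim K (span_mult A B \<inter> span_mult A' B)"
    using dim_mono[OF span_mult_B_ksubspace subalgebra_inter[OF PV]] A(2) by blast
  then show ?thesis
    using dim_set_add_inter[OF PV] span_mult_set_add[OF A(1) A'(1) B_carrier] by simp
qed

text \<open>Submodularity makes the intersection and the sum of two intersecting atoms fragments of
  total boundary at most \<open>2 * connectivity\<close>, which forces the intersection to be an atom.\<close>

lemma atom_subset_of_inter:
  assumes A: "atom A" and A': "atom A'" and meet: "A \<inter> A' \<noteq> {\<zero>}"
  shows "A \<subseteq> A'"
proof -
  have fA: "fragment A" "boundary A = connectivity" "dim K A = atom_dim"
    and fA': "fragment A'" "boundary A' = connectivity" "dim K A' = atom_dim"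
    using A A' unfolding atom_def by auto
  note X = fragmentD[OF fA(1)] fragmentD[OF fA'(1)]
  let ?I = "A \<inter> A'" and ?S = "A <+>\<^bsub>R\<^esub> A'"
  have fI: "fragment ?I"
    using fragment_inter[OF fA(1) fA'(1) meet] .
  have "dim K (span_mult A B) = atom_dim + connectivity"
      "dim K (span_mult A' B) = atom_dim + connectivity"
    using dim_add_boundary[OF fA(1)] dim_add_boundary[OF fA'(1)] fA(2,3) fA'(2,3) by auto
  then have sub: "dim K (span_mult ?S B) + dim K (span_mult ?I B) \<le> 2 * atom_dim + 2 * connectivity"
    using dim_span_mult_submodular[OF X(1,2) X(5,6)] by simp
  have "dim K (span_mult ?S B) < dim K F"
    using sub dim_add_connectivity_le[OF fI] dim_fragment_pos[OF fI] atom_dim_bound by linarith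
  moreover have "?S \<noteq> {\<zero>}"
    using set_add_upper1[OF X(1) X(5)] X(3) ksubspace_zero[OF X(1)] by blast
  ultimately have fS: "fragment ?S"
    unfolding fragment_def
    using set_add_ksubspace[OF X(1) X(5)] set_add_least[OF F_ksubspace X(2) X(6)] by auto
  have "dim K ?S + dim K ?I = 2 * atom_dim"
    using dim_set_add_inter[OF X(1) X(5)] fA(3) fA'(3) by simp
  then have "boundary ?I \<le> connectivity"
    using sub dim_add_boundary[OF fI] dim_add_connectivity_le[OF fS] by linarith
  then have "atom_dim \<le> dim K ?I"
    using atom_dim_le[OF fI] connectivity_le[OF fI] by simp
  then have "?I = A"
    using dim_seteq[OF subalgebra_inter[OF X(1) X(5)] X(1)] fA(3) by auto
  then show ?thesis by blast
qed

lemma atom_subfield: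
  assumes H: "atom H" and one: "\<one> \<in> H"
  shows "subfield H R"
proof -
  note fH = fragmentD[OF conjunct1[OF H[unfolded atom_def]]]
  show ?thesis
  proof (rule subfield_if_dilates_absorb[OF fH(1) one])
    fix h assume h: "h \<in> H" "h \<noteq> \<zero>"
    then have "h \<in> H \<inter> dilate h H"
      using dilate_memI[OF one, of h] fH(2) F_carrier by auto
    then show "H \<subseteq> dilate h H"
      using atom_subset_of_inter[OF H atom_dilate[OF H _ h(2)]] h fH(2) by blast
  qed
qed

lemma exists_subfield_atom: "\<exists>H. atom H \<and> subfield H R"
proof -
  obtain A where A: "atom A"
    using exists_atom by blast
  note fA = fragmentD[OF conjunct1[OF A[unfolded atom_def]]]
  obtain x where x: "x \<in> A" "x \<noteq> \<zero>"
    using fA(3) ksubspace_zero[OF fA(1)] by blast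
  then have ix: "inv x \<in> F" "inv x \<noteq> \<zero>" "inv x \<otimes> x = \<one>"
    using subfield_m_inv[OF F] fA(2) by (auto simp: F_inv)
  have H: "atom (dilate (inv x) A)"
    using atom_dilate[OF A ix(1,2)] .
  moreover have "\<one> \<in> dilate (inv x) A"
    using dilate_memI[OF x(1), of "inv x"] ix(3) by simp
  ultimately show ?thesis
    using atom_subfield by blast
qed

lemma dim_B_le_two_connectivity:
  assumes H: "atom H" "subfield H R" and b: "b \<in> B" "b \<notin> H"
  shows "dim K B \<le> 2 * connectivity"
proof -
  have fH: "fragment H" "boundary H = connectivity"
    using H(1) unfolding atom_def by auto
  note H' = fragmentD[OF fH(1)]
  let ?P = "span_mult H B"
  have Hc: "H \<subseteq> carrier R" and bc: "b \<in> carrier R"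
    using H'(2) F_carrier b(1) B_carrier by auto
  have PV: "ksubspace ?P"
    using span_mult_B_ksubspace[OF H'(2)] .
  have bH: "ksubspace (dilate b H)"
    using dilate_ksubspace[OF H'(1) bc] .
  have "B \<subseteq> ?P"
    using span_mult_superset[OF B(1) Hc subringE(3)[OF subfieldE(1)[OF H(2)]]]
      span_mult_commute[OF Hc B_carrier] by simp
  then have dB: "dim K B \<le> dim K ?P"
    using dim_mono[OF B(1) PV] by blast
  have "H <+>\<^bsub>R\<^esub> dilate b H \<subseteq> ?P"
    using set_add_least[OF PV span_mult_superset[OF H'(1) B_carrier B(3)]
        dilate_subset_span_mult[OF Hc B_carrier b(1)]] .
  then have "dim K (H <+>\<^bsub>R\<^esub> dilate b H) \<le> dim K ?P"
    using dim_mono[OF set_add_ksubspace[OF H'(1) bH] PV] by blast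
  moreover have "dim K (H <+>\<^bsub>R\<^esub> dilate b H) = 2 * dim K H"
  proof -
    have "b \<noteq> \<zero>"
      using b(2) ksubspace_zero[OF H'(1)] by blast
    then show ?thesis
      using dim_set_add_inter[OF H'(1) bH] subfield_inter_dilate[OF H(2) bc b(2)]
        dim_dilate[OF H'(1) bc] dim_eqI[OF zero_dim] by simp
  qed
  moreover have "dim K H + connectivity = dim K ?P"
    using dim_add_boundary[OF fH(1)] fH(2) by simp
  ultimately show ?thesis
    using dB by linarith
qed

lemma power_span_Suc_fragment:
  assumes "power_span B (Suc j) \<subseteq> F" "power_span B (Suc j) \<noteq> F"
  shows "fragment (power_span B j)"
proof -
  have "power_span B j \<subseteq> F"
    using power_span_subset_Suc[OF B(1,3)] assms(1) by blast
  moreover have "power_span B j \<noteq> {\<zero>}"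
    using one_in_power_span[OF B(1,3)] one_not_zero by blast
  ultimately show ?thesis
    unfolding fragment_def using power_span_ksubspace[OF B(1,3)] power_span_Suc[OF B(1,3)] assms(2)
    by simp
qed

lemma dim_power_span_ge:
  assumes "power_span B (Suc j) \<subseteq> F" "power_span B (Suc j) \<noteq> F"
  shows "dim K B + j * connectivity \<le> dim K (power_span B (Suc j))"
  using assms
proof (induct j)
  case 0
  then show ?case
    using power_span_1[OF B(1,3)] by simp
next
  case (Suc j)
  have "power_span B (Suc j) \<subseteq> F" "power_span B (Suc j) \<noteq> F"
    using power_span_subset_Suc[OF B(1,3), of "Suc j"] Suc(2,3) by auto
  then show ?case
    using Suc(1) dim_add_connectivity_le[OF power_span_Suc_fragment[OF Suc(2,3)]]
      power_span_Suc[OF B(1,3), of "Suc j"] by simp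
qed

lemma dim_B_le_two_connectivity_if_generates:
  assumes "power_span B n = F"
  shows "dim K B \<le> 2 * connectivity"
proof -
  obtain H where H: "atom H" "subfield H R"
    using exists_subfield_atom by blast
  note fH = fragmentD[OF conjunct1[OF H(1)[unfolded atom_def]]]
  have "\<not> B \<subseteq> H"
  proof
    assume "B \<subseteq> H"
    moreover have "K \<subseteq> H"
      using K_subset_ksubspace[OF fH(1)] subringE(3)[OF subfieldE(1)[OF H(2)]] by blast
    ultimately have "F \<subseteq> H"
      using power_span_subset_subring[OF B(1,3) subfieldE(1)[OF H(2)]] assms by blast
    moreover have "H \<subseteq> span_mult H B" "span_mult H B \<subseteq> F"
      using span_mult_superset[OF fH(1) B_carrier B(3)] span_mult_B_subset_F[OF fH(2)] .
    ultimately show False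
      using fH(4) by blast
  qed
  then show ?thesis
    using dim_B_le_two_connectivity[OF H] by blast
qed

end

context finite_field_ext
begin

lemma least_field_power_span_bound:
  assumes hB: "ksubspace B" "\<one> \<in> B" and n: "2 \<le> n" "subfield (power_span B n) R"
    and below: "\<And>j. 1 \<le> j \<Longrightarrow> j < n \<Longrightarrow> \<not> subfield (power_span B j) R"
  shows "n * dim K B \<le> 2 * dim K (power_span B n)"
proof -
  let ?F = "power_span B n"
  have KF: "K \<subseteq> ?F"
    using K_subset_ksubspace[OF power_span_ksubspace[OF hB] one_in_power_span[OF hB]] .
  obtain W where W: "ksubspace W" "W \<subseteq> ?F" "\<one> \<notin> W" "Suc (dim K W) = dim K ?F"
    using exists_hyperplane_not_one[OF n(2) KF] by blast
  have proper: "power_span B j \<subseteq> ?F" "power_span B j \<noteq> ?F" if "1 \<le> j" "j < n" for j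
    using power_span_mono[OF hB] below[OF that] n(2) that by auto
  have "power_span B 1 \<subseteq> ?F" "power_span B 1 \<noteq> ?F"
    using proper[of 1] n(1) by simp_all
  then have "B \<subseteq> ?F" "B \<noteq> ?F"
    unfolding power_span_1[OF hB] .
  then interpret fragments R K ?F W B
    using fragments.intro[OF field_hyperplane.intro[OF finite_field_ext_axioms]]
      field_hyperplane_axioms.intro[OF n(2) KF W] fragments_axioms.intro hB by blast
  obtain t where t: "n = Suc (Suc t)"
    using n(1) by (metis add_2_eq_Suc le_Suc_ex)
  have "dim K B + t * connectivity \<le> dim K (power_span B (Suc t))"
    using dim_power_span_ge proper[of "Suc t"] t by simp
  moreover have "dim K (power_span B (Suc t)) \<le> dim K ?F"
    using dim_mono[OF power_span_ksubspace[OF hB] power_span_ksubspace[OF hB] proper(1)] t by simp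
  moreover have "t * dim K B \<le> 2 * (t * connectivity)"
    using mult_le_mono2[OF dim_B_le_two_connectivity_if_generates[OF refl], of t] by simp
  moreover have "n * dim K B = 2 * dim K B + t * dim K B"
    using t by simp
  ultimately show ?thesis
    by linarith
qed

lemma least_field_power_span_mult_dim_le:
  assumes B: "ksubspace B" "\<one> \<in> B" and n: "1 \<le> n" "subfield (power_span B n) R"
    and below: "\<And>j. 1 \<le> j \<Longrightarrow> j < n \<Longrightarrow> \<not> subfield (power_span B j) R"
  shows "n * dim K B \<le> 2 * dim K (carrier R)"
proof (cases "n = 1")
  case True
  then show ?thesis
    using dim_le_dim_carrier[OF B(1)] by simp
next
  case False
  then have "n * dim K B \<le> 2 * dim K (power_span B n)"
    using least_field_power_span_bound[OF B _ n(2)] below n(1) by simp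
  then show ?thesis
    using dim_le_dim_carrier[OF power_span_ksubspace[OF B], of n] by linarith
qed

end

theorem mainTheorem15:
  fixes L (structure) and K B :: "'a set"
  assumes "field L"
    and "subfield K L"
    and "ring.finite_dimension L K (carrier L)"
    and "ring.separable_ext L K"
    and "subalgebra K B L"
    and "\<one>\<^bsub>L\<^esub> \<in> B"
  shows "(\<exists>n\<ge>1. subfield (ring.span_set L K (ring.prod_set L B n)) L)
    \<and> real (LEAST n. n \<ge> 1 \<and> subfield (ring.span_set L K (ring.prod_set L B n)) L)
        \<le> 2 * real (ring.dim L K (carrier L)) / real (ring.dim L K B)"
proof -
  interpret finite_field_ext L K
    using assms(1-3) by (simp add: finite_field_ext_def finite_field_ext_axioms_def)
  note B = assms(5,6)
  define n where "n = (LEAST n. n \<ge> 1 \<and> subfield (power_span B n) L)"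
  have ex: "\<exists>n\<ge>1. subfield (power_span B n) L"
    using exists_power_span_stable[OF B] power_span_stable_subfield[OF B] by blast
  then have n: "n \<ge> 1" "subfield (power_span B n) L"
    unfolding n_def by (metis (mono_tags, lifting) LeastI_ex)+
  have below: "\<not> subfield (power_span B j) L" if "1 \<le> j" "j < n" for j
    using not_less_Least[of j "\<lambda>n. n \<ge> 1 \<and> subfield (power_span B n) L"] that unfolding n_def by blast
  have "n * dim K B \<le> 2 * dim K (carrier L)"
    using least_field_power_span_mult_dim_le[OF B n below] .
  moreover have "0 < dim K B"
    using dim_eq_0_iff[OF B(1)] B(2) one_not_zero by auto
  ultimately have "real n \<le> 2 * real (dim K (carrier L)) / real (dim K B)"
    by (simp add: pos_le_divide_eq flip: of_nat_mult)
  then show ?thesis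
    using ex unfolding n_def power_span_def by simp
qed

end
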